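(* Fix a domain structure $\Delta$ and a partition $S_0\sqcup S_1\sqcup S_2=\mathrm{Pooled}(\Delta)$. When $\theta$ is restricted so that every $\theta_{cd}$ is Kronecker non-separable, it still holds that, for all $(\pi,\theta)$ in the restricted parameter space outside a Lebesgue-null set, $\mathrm{rank}_\kappa A^{(k)}=\min(C,\kappa_k)$ for $k=0,1,2$, where $\kappa_k=\prod_{j\in\bigcup_{\mathscr P\in S_k}\mathscr P}Q_j$.
   Context: Notation: for a positive integer $n$, $\mathbb{Z}_n=\{0,1,\dots,n-1\}$. A domain latent class model (DLCM) has $J$ categorical items; item $j\in\mathbb{Z}_J$ takes values in $\mathbb{Z}_{Q_j}$ with $Q_j\ge 2$. An observation consists of a response vector $X_i$ and a latent class $c_i\in\mathbb{Z}_C$. The parameters are $\omega=(\pi,\theta,\Delta)$: $\pi$ is a probability vector with $P(c_i=c)=\pi_c$; $\Delta=(\delta_{jc})$ is a $J\times C$ matrix with entries in $\mathbb{Z}_D$; $J(c,d)=\{j:\delta_{jc}=d\}$, and $(c,d)$ with $J(c,d)\neq\emptyset$ is a domain. For $S\subseteq\mathbb{Z}_J$ with elements $j_1<\dots<j_m$, $V(S)^\top X=\sum_{k} X_{j_k}\prod_{l<k}Q_{j_l}$. For each domain, $\theta_{cd}$ is a probability vector over the $R_{cd}=\prod_{j\in J(c,d)}Q_j$ patterns, and given $c_i=c$ the subvectors on distinct domains are independent with $P(V(J(c,d))^\top X_i=r\mid c_i=c)=\theta_{cdr}$. For fixed $\Delta$, $(\pi,\theta)$ ranges over a product of simplices with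 Lebesgue measure. $\theta_{cd}$ is Kronecker separable if there is a partition $J(c,d)=J_0\sqcup J_1$ into two nonempty parts such that under $\theta_{cd}$ the subvectors on $J_0$ and $J_1$ are independent; otherwise non-separable. $\mathrm{Pooled}(\Delta)$ is the partition of $\mathbb{Z}_J$ into the vertex sets of connected components of the graph with edges $j\leftrightarrow j'$ whenever $\delta_{jc}=\delta_{j'c}$ for some $c$. With $M=|\mathrm{Pooled}(\Delta)|$, $\mathbf P(\mathscr P\mid c)$ the vector with entries $P(V(\mathscr P)^\top X_i=r\mid\omega,c_i=c)$, and $B_{\mathscr P}$ the matrix with $c$-th column $\pi_c^{1/M}\mathbf P(\mathscr P\mid c)$, set $A^{(k)}=\bigotimes^*_{\mathscr P\in S_k}B_{\mathscr P}$ (column-wise Kronecker product; $1\times C$ matrix of ones if $S_k=\emptyset$). $\mathrm{rank}_\kappa$ denotes Kruskal rank: the largest $k$ such that every $k$ columns are linearly independent. *)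

theory Defs
  imports "HOL-Analysis.Analysis"
begin

text \<open>Domain latent class model (DLCM). Items are 0..J-1, item j takes values in {0..<Q j};
  classes 0..C-1; the domain structure is Delta j c (entries in {0..<D}).\<close>

definition enc :: "(nat \<Rightarrow> nat) \<Rightarrow> nat set \<Rightarrow> (nat \<Rightarrow> nat) \<Rightarrow> nat" where
  "enc Q S x = (\<Sum>j\<in>S. x j * (\<Prod>j'\<in>{j'\<in>S. j' < j}. Q j'))"

definition patterns :: "(nat \<Rightarrow> nat) \<Rightarrow> nat set \<Rightarrow> (nat \<Rightarrow> nat) set" where
  "patterns Q S = PiE S (\<lambda>j. {..<Q j})"

definition Jset :: "nat \<Rightarrow> (nat \<Rightarrow> nat \<Rightarrow> nat) \<Rightarrow> nat \<Rightarrow> nat \<Rightarrow> nat set" where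
  "Jset J Delta c d = {j. j < J \<and> Delta j c = d}"

definition domains :: "nat \<Rightarrow> nat \<Rightarrow> nat \<Rightarrow> (nat \<Rightarrow> nat \<Rightarrow> nat) \<Rightarrow> (nat \<times> nat) set" where
  "domains J C D Delta = {(c,d). c < C \<and> d < D \<and> Jset J Delta c d \<noteq> {}}"

definition Rcd :: "nat \<Rightarrow> (nat \<Rightarrow> nat) \<Rightarrow> (nat \<Rightarrow> nat \<Rightarrow> nat) \<Rightarrow> nat \<Rightarrow> nat \<Rightarrow> nat" where
  "Rcd J Q Delta c d = (\<Prod>j\<in>Jset J Delta c d. Q j)"

text \<open>The product of simplices is
  parametrised by dropping the last coordinate of every probability vector:
  Inl c ~ pi_c (c < C-1), Inr (c,d,r) ~ theta_{cdr} (r < R_cd - 1). Lebesgue measure on the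
  product of simplices is Lebesgue measure in these coordinates.\<close>
type_synonym pidx = "nat + nat \<times> nat \<times> nat"

definition param_index ::
  "nat \<Rightarrow> (nat \<Rightarrow> nat) \<Rightarrow> nat \<Rightarrow> nat \<Rightarrow> (nat \<Rightarrow> nat \<Rightarrow> nat) \<Rightarrow> pidx set" where
  "param_index J Q C D Delta =
     Inl ` {..<C - 1} \<union>
     Inr ` {(c,d,r). (c,d) \<in> domains J C D Delta \<and> r < Rcd J Q Delta c d - 1}"

definition param_measure ::
  "nat \<Rightarrow> (nat \<Rightarrow> nat) \<Rightarrow> nat \<Rightarrow> nat \<Rightarrow> (nat \<Rightarrow> nat \<Rightarrow> nat) \<Rightarrow> (pidx \<Rightarrow> real) measure" where
  "param_measure J Q C D Delta = PiM (param_index J Q C D Delta) (\<lambda>_. lborel)"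

definition pi_of :: "nat \<Rightarrow> (pidx \<Rightarrow> real) \<Rightarrow> nat \<Rightarrow> real" where
  "pi_of C x c = (if c < C - 1 then x (Inl c) else 1 - (\<Sum>c'<C - 1. x (Inl c')))"

definition theta_of ::
  "nat \<Rightarrow> (nat \<Rightarrow> nat) \<Rightarrow> (nat \<Rightarrow> nat \<Rightarrow> nat) \<Rightarrow> (pidx \<Rightarrow> real) \<Rightarrow> nat \<Rightarrow> nat \<Rightarrow> nat \<Rightarrow> real" where
  "theta_of J Q Delta x c d r =
     (let R = Rcd J Q Delta c d in
      if r < R - 1 then x (Inr (c,d,r)) else 1 - (\<Sum>r'<R - 1. x (Inr (c,d,r'))))"

definition in_simplices ::
  "nat \<Rightarrow> (nat \<Rightarrow> nat) \<Rightarrow> nat \<Rightarrow> nat \<Rightarrow> (nat \<Rightarrow> nat \<Rightarrow> nat) \<Rightarrow> (pidx \<Rightarrow> real) \<Rightarrow> bool" where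
  "in_simplices J Q C D Delta x \<longleftrightarrow>
     (\<forall>c<C. pi_of C x c \<ge> 0) \<and>
     (\<forall>(c,d)\<in>domains J C D Delta. \<forall>r<Rcd J Q Delta c d. theta_of J Q Delta x c d r \<ge> 0)"

definition marg :: "(nat \<Rightarrow> nat) \<Rightarrow> nat set \<Rightarrow> ((nat \<Rightarrow> nat) \<Rightarrow> real) \<Rightarrow> nat set \<Rightarrow> (nat \<Rightarrow> nat) \<Rightarrow> real" where
  "marg Q S f A u = (\<Sum>v\<in>{v\<in>patterns Q S. restrict v A = u}. f v)"

definition kron_separable :: "(nat \<Rightarrow> nat) \<Rightarrow> nat set \<Rightarrow> ((nat \<Rightarrow> nat) \<Rightarrow> real) \<Rightarrow> bool" where
  "kron_separable Q S f \<longleftrightarrow>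
     (\<exists>A B. A \<noteq> {} \<and> B \<noteq> {} \<and> A \<inter> B = {} \<and> A \<union> B = S \<and>
        (\<forall>v\<in>patterns Q S. f v = marg Q S f A (restrict v A) * marg Q S f B (restrict v B)))"

definition theta_dist ::
  "nat \<Rightarrow> (nat \<Rightarrow> nat) \<Rightarrow> (nat \<Rightarrow> nat \<Rightarrow> nat) \<Rightarrow> (pidx \<Rightarrow> real) \<Rightarrow> nat \<Rightarrow> nat \<Rightarrow> (nat \<Rightarrow> nat) \<Rightarrow> real" where
  "theta_dist J Q Delta x c d v = theta_of J Q Delta x c d (enc Q (Jset J Delta c d) v)"

definition cond_prob ::
  "nat \<Rightarrow> (nat \<Rightarrow> nat) \<Rightarrow> nat \<Rightarrow> nat \<Rightarrow> (nat \<Rightarrow> nat \<Rightarrow> nat) \<Rightarrow> (pidx \<Rightarrow> real) \<Rightarrow> nat \<Rightarrow> (nat \<Rightarrow> nat) \<Rightarrow> real" where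
  "cond_prob J Q C D Delta x c v =
     (\<Prod>d\<in>{d. (c,d) \<in> domains J C D Delta}. theta_dist J Q Delta x c d v)"

definition block_prob ::
  "nat \<Rightarrow> (nat \<Rightarrow> nat) \<Rightarrow> nat \<Rightarrow> nat \<Rightarrow> (nat \<Rightarrow> nat \<Rightarrow> nat) \<Rightarrow> (pidx \<Rightarrow> real) \<Rightarrow> nat set \<Rightarrow> nat \<Rightarrow> nat \<Rightarrow> real" where
  "block_prob J Q C D Delta x P c r =
     (\<Sum>v\<in>{v\<in>patterns Q {..<J}. enc Q P v = r}. cond_prob J Q C D Delta x c v)"

definition pooled :: "nat \<Rightarrow> nat \<Rightarrow> (nat \<Rightarrow> nat \<Rightarrow> nat) \<Rightarrow> nat set set" where
  "pooled J C Delta =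
     {..<J} // ({(j,j'). j < J \<and> j' < J \<and> (\<exists>c<C. Delta j c = Delta j' c)}\<^sup>*)"

text \<open>Rows of A^(k) = column-wise Kronecker product of B_P, P in Sk: a row is a choice of a row
  index r_P < prod_{j in P} Q_j for each P in Sk (row order is irrelevant for Kruskal rank).
  If Sk is empty there is exactly one row and every entry is 1.\<close>
definition A_rows :: "(nat \<Rightarrow> nat) \<Rightarrow> nat set set \<Rightarrow> (nat set \<Rightarrow> nat) set" where
  "A_rows Q Sk = PiE Sk (\<lambda>P. {..<(\<Prod>j\<in>P. Q j)})"

definition A_col ::
  "nat \<Rightarrow> (nat \<Rightarrow> nat) \<Rightarrow> nat \<Rightarrow> nat \<Rightarrow> (nat \<Rightarrow> nat \<Rightarrow> nat) \<Rightarrow> nat set set \<Rightarrow> (pidx \<Rightarrow> real)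
     \<Rightarrow> nat \<Rightarrow> (nat set \<Rightarrow> nat) \<Rightarrow> real" where
  "A_col J Q C D Delta Sk x c f =
     (\<Prod>P\<in>Sk. root (card (pooled J C Delta)) (pi_of C x c) * block_prob J Q C D Delta x P c (f P))"

definition kruskal_rank :: "'r set \<Rightarrow> nat \<Rightarrow> (nat \<Rightarrow> 'r \<Rightarrow> real) \<Rightarrow> nat" where
  "kruskal_rank Rows n col =
     (GREATEST k. k \<le> n \<and>
        (\<forall>T\<subseteq>{..<n}. card T = k \<longrightarrow>
           (\<forall>a. (\<forall>row\<in>Rows. (\<Sum>c\<in>T. a c * col c row) = 0) \<longrightarrow> (\<forall>c\<in>T. a c = 0))))"

end

theory Submission
  imports Defs "Jordan_Normal_Form.Determinant" "HOL-Computational_Algebra.Polynomial"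
begin

text \<open>Every entry of \<open>A^(k)\<close> is, up to the scaling \<open>\<pi>\<^sub>c^(|S\<^sub>k|/M)\<close> of its column, a
  polynomial in the free coordinates of the parameter space, so a maximal minor multiplied by
  \<open>\<Prod>\<^sub>c \<pi>\<^sub>c\<close> is a polynomial, and its zero set is Lebesgue-null unless it vanishes identically
  (induction on the number of variables and Fubini). It does not: at the degenerate parameter
  where class \<open>c\<close> emits a fixed response pattern whose pooled blocks encode the row \<open>h c\<close>,
  for an injection \<open>h\<close> of the chosen columns into the \<open>\<kappa>\<^sub>k\<close> rows, the minor is the identity.
  Discarding finitely many null sets gives Kruskal rank \<open>min(C, \<kappa>\<^sub>k)\<close> generically.\<close>

section \<open>Mixed-radix encoding of response patterns\<close>

lemma enc_cong: "(\<And>j. j \<in> S \<Longrightarrow> v j = w j) \<Longrightarrow> enc Q S v = enc Q S w"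
  unfolding enc_def by (rule sum.cong) auto

lemma enc_restrict: "enc Q S (restrict v S) = enc Q S v"
  by (rule enc_cong) simp

lemma enc_insert_greater:
  assumes "finite A" "\<forall>a\<in>A. a < b"
  shows "enc Q (insert b A) v = enc Q A v + v b * (\<Prod>j\<in>A. Q j)"
proof -
  have "b \<notin> A" using assms(2) by auto
  moreover have "{j' \<in> insert b A. j' < b} = A" using assms(2) by auto
  moreover have "{j' \<in> insert b A. j' < j} = {j' \<in> A. j' < j}" if "j \<in> A" for j
    using assms(2) that by auto
  ultimately show ?thesis
    unfolding enc_def using assms(1) by (simp add: add.commute cong: sum.cong)
qed

lemma patterns_insertD:
  assumes "v \<in> patterns Q (insert b A)" "b \<notin> A"
  shows "restrict v A \<in> patterns Q A" "v b < Q b"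
  using assms unfolding patterns_def by (auto simp: PiE_def Pi_def)

lemma restrict_patterns: "v \<in> patterns Q S' \<Longrightarrow> S \<subseteq> S' \<Longrightarrow> restrict v S \<in> patterns Q S"
  unfolding patterns_def by auto

lemma finite_patterns: "finite S \<Longrightarrow> finite (patterns Q S)"
  unfolding patterns_def by (rule finite_PiE) auto

lemma enc_less: "finite S \<Longrightarrow> v \<in> patterns Q S \<Longrightarrow> enc Q S v < (\<Prod>j\<in>S. Q j)"
proof (induction S arbitrary: v rule: finite_linorder_max_induct)
  case empty
  then show ?case by (simp add: enc_def)
next
  case (insert b A)
  have "b \<notin> A" using insert by auto
  note v = patterns_insertD[OF insert(4) this]
  have "enc Q A v < (\<Prod>j\<in>A. Q j)" using insert(3)[OF v(1)] by (metis enc_restrict)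
  then have "enc Q A v + v b * (\<Prod>j\<in>A. Q j) < Suc (v b) * (\<Prod>j\<in>A. Q j)" by simp
  also have "\<dots> \<le> Q b * (\<Prod>j\<in>A. Q j)" using v(2) by (intro mult_right_mono) auto
  finally show ?case using enc_insert_greater[OF insert(1,2)] insert(1) \<open>b \<notin> A\<close> by simp
qed

lemma enc_inj_on: "finite S \<Longrightarrow> inj_on (enc Q S) (patterns Q S)"
proof (induction S rule: finite_linorder_max_induct)
  case empty
  then show ?case by (simp add: patterns_def inj_on_def)
next
  case (insert b A)
  have bA: "b \<notin> A" using insert by auto
  show ?case
  proof (rule inj_onI)
    fix v w assume v: "v \<in> patterns Q (insert b A)" and w: "w \<in> patterns Q (insert b A)"
      and e: "enc Q (insert b A) v = enc Q (insert b A) w"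
    note rv = patterns_insertD(1)[OF v bA] and rw = patterns_insertD(1)[OF w bA]
    let ?N = "\<Prod>j\<in>A. Q j"
    have lt: "enc Q A v < ?N" "enc Q A w < ?N"
      using enc_less[OF insert(1) rv] enc_less[OF insert(1) rw] by (simp_all add: enc_restrict)
    have digits: "enc Q A v + v b * ?N = enc Q A w + w b * ?N"
      using e enc_insert_greater[OF insert(1,2)] by simp
    \<comment> \<open>Reading off the remainder and the quotient modulo \<open>?N\<close>.\<close>
    then have "enc Q A v = enc Q A w" using lt
      by (metis mod_less mod_mult_self1)
    moreover from this digits have "v b = w b" using lt by auto
    ultimately have "restrict v A = restrict w A"
      using insert(3) rv rw by (auto simp: inj_on_def enc_restrict)
    with \<open>v b = w b\<close> show "v = w" using v w unfolding patterns_def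
      by (intro ext) (metis PiE_E insertE restrict_apply')
  qed
qed

lemma enc_surj: "finite S \<Longrightarrow> r < (\<Prod>j\<in>S. Q j) \<Longrightarrow> \<exists>v\<in>patterns Q S. enc Q S v = r"
proof (induction S arbitrary: r rule: finite_linorder_max_induct)
  case empty
  then show ?case by (simp add: patterns_def enc_def)
next
  case (insert b A)
  have bA: "b \<notin> A" using insert by auto
  let ?N = "\<Prod>j\<in>A. Q j"
  have r: "r < Q b * ?N" using insert(4) insert(1) bA by simp
  then have "?N > 0" by (cases "?N = 0") auto
  then obtain u where u: "u \<in> patterns Q A" "enc Q A u = r mod ?N"
    using insert(3)[of "r mod ?N"] by auto
  have "r div ?N < Q b" using r \<open>?N > 0\<close> by (simp add: div_less_iff_less_mult mult.commute)
  define v where "v = u(b := r div ?N)"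
  have "v \<in> patterns Q (insert b A)"
    using u(1) \<open>r div ?N < Q b\<close> bA unfolding v_def patterns_def
    by (auto simp: PiE_def Pi_def extensional_def)
  moreover have "enc Q A v = enc Q A u" unfolding v_def by (rule enc_cong) (use bA in auto)
  moreover have "v b = r div ?N" by (simp add: v_def)
  ultimately show ?case
    using u(2) enc_insert_greater[OF insert(1,2), of Q v]
    by (intro bexI[of _ v]) (simp_all add: mod_div_mult_eq)
qed

lemma enc_less_subset:
  "finite S \<Longrightarrow> S \<subseteq> S' \<Longrightarrow> v \<in> patterns Q S' \<Longrightarrow> enc Q S v < (\<Prod>j\<in>S. Q j)"
  using enc_less[OF _ restrict_patterns] by (metis enc_restrict)

lemma enc_eq_imp_eq_on:
  assumes "finite S" "S \<subseteq> S'" "v \<in> patterns Q S'" "w \<in> patterns Q S'"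
    and "enc Q S v = enc Q S w" "j \<in> S"
  shows "v j = w j"
proof -
  have "restrict v S = restrict w S"
    using enc_inj_on[OF assms(1)] restrict_patterns[OF assms(3,2)] restrict_patterns[OF assms(4,2)]
      assms(5) by (auto simp: inj_on_def enc_restrict)
  then show ?thesis using assms(6) by (metis restrict_apply')
qed

lemma prod_indicator_eq:
  "finite A \<Longrightarrow> (\<Prod>a\<in>A. if P a then 1 else 0) = (if \<forall>a\<in>A. P a then 1 else (0::real))"
  by (induction A rule: finite_induct) auto

section \<open>Pooled blocks and the rows of \<open>A^(k)\<close>\<close>

text \<open>Cutting the reflexive transitive closure down to \<open>{..<J}\<close> makes it an equivalence
  relation on \<open>{..<J}\<close>, so that the library facts about quotients apply to \<open>pooled\<close>.\<close>
definition pooled_rel :: "nat \<Rightarrow> nat \<Rightarrow> (nat \<Rightarrow> nat \<Rightarrow> nat) \<Rightarrow> nat rel" where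
  "pooled_rel J C Delta =
     {(j,j'). j < J \<and> j' < J \<and> (\<exists>c<C. Delta j c = Delta j' c)}\<^sup>* \<inter> {..<J} \<times> {..<J}"

lemma equiv_pooled_rel: "equiv {..<J} (pooled_rel J C Delta)"
proof -
  let ?r = "{(j,j'). j < J \<and> j' < J \<and> (\<exists>c<C. Delta j c = Delta j' c)}"
  have "sym (?r\<^sup>*)" by (rule sym_rtrancl) (auto simp: sym_def)
  then show ?thesis
    unfolding pooled_rel_def equiv_def refl_on_def sym_def trans_def
    by (blast intro: rtrancl_trans)
qed

lemma pooled_eq_quotient: "pooled J C Delta = {..<J} // pooled_rel J C Delta"
proof -
  let ?r = "{(j,j'). j < J \<and> j' < J \<and> (\<exists>c<C. Delta j c = Delta j' c)}"
  have "(a, b) \<in> ?r\<^sup>* \<Longrightarrow> a < J \<Longrightarrow> b < J" for a b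
    by (induction rule: rtrancl_induct) auto
  then have "?r\<^sup>* `` {a} = pooled_rel J C Delta `` {a}" if "a < J" for a
    using that unfolding pooled_rel_def by blast
  then show ?thesis unfolding pooled_def quotient_def by (intro SUP_cong) auto
qed

lemma finite_pooled: "finite (pooled J C Delta)"
  unfolding pooled_eq_quotient
  by (rule finite_quotient) (auto simp: pooled_rel_def)

lemma pooled_subset: "P \<in> pooled J C Delta \<Longrightarrow> P \<subseteq> {..<J}"
  unfolding pooled_eq_quotient by (rule in_quotient_imp_subset[OF equiv_pooled_rel])

lemma disjoint_pooled: "disjoint (pooled J C Delta)"
  unfolding pooled_eq_quotient pairwise_def disjnt_def
  using quotient_disj[OF equiv_pooled_rel, of _ J C Delta] by blast

lemma subset_pooled_disjoint_blocks:
  assumes "Sk \<subseteq> pooled J C Delta"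
  shows "disjoint Sk" "\<forall>P\<in>Sk. finite P \<and> P \<subseteq> {..<J}"
proof -
  show "disjoint Sk" by (rule pairwise_subset[OF disjoint_pooled assms])
  show "\<forall>P\<in>Sk. finite P \<and> P \<subseteq> {..<J}"
    using assms pooled_subset by (meson finite_lessThan finite_subset subsetD)
qed

lemma finite_A_rows: "finite Sk \<Longrightarrow> \<forall>P\<in>Sk. finite P \<Longrightarrow> finite (A_rows Q Sk)"
  unfolding A_rows_def by (intro finite_PiE) auto

lemma card_A_rows:
  assumes "finite Sk" "\<forall>P\<in>Sk. finite P" "disjoint Sk"
  shows "card (A_rows Q Sk) = (\<Prod>j\<in>\<Union>Sk. Q j)"
proof -
  have "card (A_rows Q Sk) = (\<Prod>P\<in>Sk. \<Prod>j\<in>P. Q j)"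
    unfolding A_rows_def using assms(1) by (simp add: card_PiE)
  also have "\<dots> = (\<Prod>j\<in>\<Union>Sk. Q j)"
    using assms(2,3) by (simp add: prod.Union_disjoint pairwise_def disjnt_def)
  finally show ?thesis .
qed

lemma A_rows_realised:
  assumes Q: "\<forall>j<J. Q j > 0" and Sk: "disjoint Sk" "\<forall>P\<in>Sk. finite P \<and> P \<subseteq> {..<J}"
    and f: "f \<in> A_rows Q Sk"
  shows "\<exists>w\<in>patterns Q {..<J}. \<forall>P\<in>Sk. enc Q P w = f P"
proof -
  have "\<forall>P\<in>Sk. \<exists>u\<in>patterns Q P. enc Q P u = f P"
    using Sk(2) f enc_surj unfolding A_rows_def by blast
  then obtain u where u: "\<And>P. P \<in> Sk \<Longrightarrow> u P \<in> patterns Q P \<and> enc Q P (u P) = f P"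
    by metis
  define block where "block j = (THE P. P \<in> Sk \<and> j \<in> P)" for j
  have block: "block j = P" if "P \<in> Sk" "j \<in> P" for P j
    unfolding block_def
    using that Sk(1) by (intro the_equality) (auto simp: pairwise_def disjnt_def)
  define w where "w = (\<lambda>j\<in>{..<J}. if j \<in> \<Union>Sk then u (block j) j else 0)"
  have w: "w j = u P j" if "P \<in> Sk" "j \<in> P" for P j
    using that Sk(2) block[OF that] unfolding w_def by auto
  have "w \<in> patterns Q {..<J}"
    unfolding patterns_def
  proof (rule PiE_I)
    fix j assume j: "j \<in> {..<J}"
    show "w j \<in> {..<Q j}"
    proof (cases "j \<in> \<Union>Sk")
      case True
      then obtain P where "P \<in> Sk" "j \<in> P" by auto
      then show ?thesis using u w unfolding patterns_def by fastforce
    qed (use j Q w_def in auto)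
  qed (simp add: w_def)
  moreover have "enc Q P w = f P" if "P \<in> Sk" for P
    using u[OF that] w[OF that] enc_cong[of P w "u P"] by simp
  ultimately show ?thesis by blast
qed

section \<open>The block probabilities at a deterministic parameter\<close>

text \<open>Uniform class weights, and class \<open>c\<close> produces the response pattern \<open>w c\<close> with
  probability one.\<close>
definition point_mass_param ::
  "nat \<Rightarrow> (nat \<Rightarrow> nat) \<Rightarrow> nat \<Rightarrow> (nat \<Rightarrow> nat \<Rightarrow> nat) \<Rightarrow> (nat \<Rightarrow> nat \<Rightarrow> nat) \<Rightarrow> pidx \<Rightarrow> real"
  where
  "point_mass_param J Q C Delta w = (\<lambda>i. case i of Inl c \<Rightarrow> 1 / real C
      | Inr (c,d,r) \<Rightarrow> if r = enc Q (Jset J Delta c d) (w c) then 1 else 0)"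

lemma pi_of_point_mass:
  assumes "C \<ge> 1" "c < C"
  shows "pi_of C (point_mass_param J Q C Delta w) c = 1 / real C"
proof (cases "c < C - 1")
  case False
  then have "pi_of C (point_mass_param J Q C Delta w) c = 1 - real (C - 1) / real C"
    by (simp add: pi_of_def point_mass_param_def)
  also have "\<dots> = 1 / real C" using assms by (simp add: field_simps of_nat_diff)
  finally show ?thesis .
qed (simp add: pi_of_def point_mass_param_def)

lemma theta_of_point_mass:
  assumes "r < Rcd J Q Delta c d" "enc Q (Jset J Delta c d) (w c) < Rcd J Q Delta c d"
  shows "theta_of J Q Delta (point_mass_param J Q C Delta w) c d r =
           (if r = enc Q (Jset J Delta c d) (w c) then 1 else 0)"
proof (cases "r < Rcd J Q Delta c d - 1")
  case False
  let ?R = "Rcd J Q Delta c d" and ?e = "enc Q (Jset J Delta c d) (w c)"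
  have "(\<Sum>r'<?R - 1. point_mass_param J Q C Delta w (Inr (c, d, r'))) = (if ?e < ?R - 1 then 1 else 0)"
    unfolding point_mass_param_def by (simp add: sum.delta')
  then show ?thesis
    using False assms by (auto simp: theta_of_def Let_def)
qed (simp add: theta_of_def point_mass_param_def)

lemma finite_Jset: "finite (Jset J Delta c d)"
  unfolding Jset_def by auto

lemma Jset_subset: "Jset J Delta c d \<subseteq> {..<J}"
  unfolding Jset_def by auto

lemma cond_prob_point_mass:
  assumes Delta: "\<forall>j<J. \<forall>c<C. Delta j c < D" and c: "c < C"
    and w: "w c \<in> patterns Q {..<J}" and v: "v \<in> patterns Q {..<J}"
  shows "cond_prob J Q C D Delta (point_mass_param J Q C Delta w) c v = (if v = w c then 1 else 0)"
proof -
  let ?Dc = "{d. (c, d) \<in> domains J C D Delta}"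
  let ?same = "\<lambda>d. enc Q (Jset J Delta c d) v = enc Q (Jset J Delta c d) (w c)"
  have "finite ?Dc" unfolding domains_def by (rule finite_subset[of _ "{..<D}"]) auto
  have "cond_prob J Q C D Delta (point_mass_param J Q C Delta w) c v =
          (\<Prod>d\<in>?Dc. if ?same d then 1 else 0)"
    unfolding cond_prob_def theta_dist_def
    using enc_less_subset[OF finite_Jset Jset_subset v] enc_less_subset[OF finite_Jset Jset_subset w]
    by (intro prod.cong refl) (simp add: theta_of_point_mass Rcd_def)
  also have "\<dots> = (if \<forall>d\<in>?Dc. ?same d then 1 else 0)"
    by (rule prod_indicator_eq[OF \<open>finite ?Dc\<close>])
  also have "(\<forall>d\<in>?Dc. ?same d) \<longleftrightarrow> v = w c"
  proof
    assume same: "\<forall>d\<in>?Dc. ?same d"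
    show "v = w c"
    proof
      fix j show "v j = w c j"
      proof (cases "j < J")
        case True
        then have j: "j \<in> Jset J Delta c (Delta j c)" unfolding Jset_def by auto
        then have "Delta j c \<in> ?Dc" using Delta True c unfolding domains_def by auto
        then show ?thesis using enc_eq_imp_eq_on[OF finite_Jset Jset_subset v w _ j] same by auto
      qed (use v w in \<open>auto simp: patterns_def PiE_def extensional_def\<close>)
    qed
  qed auto
  finally show ?thesis .
qed

lemma block_prob_point_mass:
  assumes "\<forall>j<J. \<forall>c<C. Delta j c < D" "c < C" "w c \<in> patterns Q {..<J}"
  shows "block_prob J Q C D Delta (point_mass_param J Q C Delta w) P c r =
           (if enc Q P (w c) = r then 1 else 0)"
proof -
  let ?V = "{v \<in> patterns Q {..<J}. enc Q P v = r}"
  have "finite ?V" using finite_patterns[of "{..<J}" Q] by auto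
  have "block_prob J Q C D Delta (point_mass_param J Q C Delta w) P c r =
          (\<Sum>v\<in>?V. if v = w c then 1 else 0)"
    unfolding block_prob_def using cond_prob_point_mass[where c=c and w=w, OF assms] by (intro sum.cong) auto
  then show ?thesis using \<open>finite ?V\<close> assms(3) by (simp add: sum.delta)
qed

definition block_prob_prod ::
  "nat \<Rightarrow> (nat \<Rightarrow> nat) \<Rightarrow> nat \<Rightarrow> nat \<Rightarrow> (nat \<Rightarrow> nat \<Rightarrow> nat) \<Rightarrow> nat set set \<Rightarrow> (pidx \<Rightarrow> real)
     \<Rightarrow> nat \<Rightarrow> (nat set \<Rightarrow> nat) \<Rightarrow> real" where
  "block_prob_prod J Q C D Delta Sk x c f = (\<Prod>P\<in>Sk. block_prob J Q C D Delta x P c (f P))"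

lemma A_col_eq_scaled_block_prob_prod:
  "A_col J Q C D Delta Sk x c f =
     root (card (pooled J C Delta)) (pi_of C x c) ^ card Sk * block_prob_prod J Q C D Delta Sk x c f"
  unfolding A_col_def block_prob_prod_def by (simp add: prod.distrib)

lemma block_prob_prod_point_mass:
  assumes "\<forall>j<J. \<forall>c<C. Delta j c < D" "c < C" "w c \<in> patterns Q {..<J}" "finite Sk"
  shows "block_prob_prod J Q C D Delta Sk (point_mass_param J Q C Delta w) c f =
           (if \<forall>P\<in>Sk. enc Q P (w c) = f P then 1 else 0)"
  unfolding block_prob_prod_def
  using block_prob_point_mass[where c=c and w=w, OF assms(1-3)] prod_indicator_eq[OF assms(4)]
  by simp

section \<open>Zero sets of polynomial functions\<close>

inductive poly_fun :: "'i set \<Rightarrow> (('i \<Rightarrow> real) \<Rightarrow> real) \<Rightarrow> bool" for I where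
  poly_fun_const: "poly_fun I (\<lambda>x. c)"
| poly_fun_var: "i \<in> I \<Longrightarrow> poly_fun I (\<lambda>x. x i)"
| poly_fun_add: "poly_fun I f \<Longrightarrow> poly_fun I g \<Longrightarrow> poly_fun I (\<lambda>x. f x + g x)"
| poly_fun_mult: "poly_fun I f \<Longrightarrow> poly_fun I g \<Longrightarrow> poly_fun I (\<lambda>x. f x * g x)"

lemma poly_fun_cong: "poly_fun I p \<Longrightarrow> (\<forall>i\<in>I. x i = y i) \<Longrightarrow> p x = p y"
  by (induction rule: poly_fun.induct) auto

lemma poly_fun_sum:
  "finite A \<Longrightarrow> (\<And>a. a \<in> A \<Longrightarrow> poly_fun I (f a)) \<Longrightarrow> poly_fun I (\<lambda>x. \<Sum>a\<in>A. f a x)"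
  by (induction A rule: finite_induct) (auto intro: poly_fun.intros)

lemma poly_fun_prod:
  "finite A \<Longrightarrow> (\<And>a. a \<in> A \<Longrightarrow> poly_fun I (f a)) \<Longrightarrow> poly_fun I (\<lambda>x. \<Prod>a\<in>A. f a x)"
  by (induction A rule: finite_induct) (auto intro: poly_fun.intros)

lemma poly_fun_diff: "poly_fun I f \<Longrightarrow> poly_fun I g \<Longrightarrow> poly_fun I (\<lambda>x. f x - g x)"
  using poly_fun_add[OF _ poly_fun_mult[OF poly_fun_const[of I "-1"]]] by simp

lemma poly_fun_measurable: "poly_fun I p \<Longrightarrow> p \<in> borel_measurable (PiM I (\<lambda>_. lborel))"
  by (induction rule: poly_fun.induct) auto

lemma det_mat_eq_sum_permutes:
  "Determinant.det (mat m m (\<lambda>(i,j). F i j)) =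
     (\<Sum>p\<in>{p. p permutes {0..<m}}. signof p * (\<Prod>i\<in>{0..<m}. F i (p i)))"
proof -
  have "(\<Prod>i\<in>{0..<m}. mat m m (\<lambda>(i,j). F i j) $$ (i, p i)) = (\<Prod>i\<in>{0..<m}. F i (p i))"
    if "p permutes {0..<m}" for p
    using that by (intro prod.cong refl) (auto simp: permutes_in_image)
  then show ?thesis unfolding Determinant.det_def by (auto intro: sum.cong)
qed

lemma poly_fun_det:
  assumes "\<And>i j. poly_fun I (\<lambda>x. F x i j)"
  shows "poly_fun I (\<lambda>x. Determinant.det (mat m m (\<lambda>(i,j). F x i j)))"
proof -
  have "poly_fun I (\<lambda>x. \<Sum>p\<in>{p. p permutes {0..<m}}. signof p * (\<Prod>i\<in>{0..<m}. F x i (p i)))"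
    by (intro poly_fun_sum poly_fun_mult poly_fun_const poly_fun_prod assms)
      (auto simp: finite_permutations)
  then show ?thesis by (simp add: det_mat_eq_sum_permutes)
qed

lemma poly_fun_insert_coeffs:
  assumes "poly_fun (insert i I) p"
  shows "\<exists>pp. (\<forall>k. poly_fun I (\<lambda>x. coeff (pp x) k)) \<and> (\<forall>x. p x = poly (pp x) (x i))"
  using assms
proof (induction rule: poly_fun.induct)
  case (poly_fun_const c)
  show ?case by (rule exI[of _ "\<lambda>x. [:c:]"]) (auto intro: poly_fun.intros)
next
  case (poly_fun_var j)
  show ?case
  proof (cases "j = i")
    case True
    show ?thesis by (rule exI[of _ "\<lambda>x. [:0,1:]"]) (auto simp: True intro: poly_fun.intros)
  next
    case False
    with poly_fun_var have "poly_fun I (\<lambda>x. coeff [:x j:] k)" for k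
      by (cases k) (auto intro: poly_fun.intros)
    then show ?thesis by (intro exI[of _ "\<lambda>x. [:x j:]"]) auto
  qed
next
  case (poly_fun_add f g)
  then obtain pf pg where pf: "\<forall>k. poly_fun I (\<lambda>x. coeff (pf x) k)" "\<forall>x. f x = poly (pf x) (x i)"
    and pg: "\<forall>k. poly_fun I (\<lambda>x. coeff (pg x) k)" "\<forall>x. g x = poly (pg x) (x i)" by blast
  show ?case
    by (intro exI[of _ "\<lambda>x. pf x + pg x"]) (auto simp: pf pg intro: poly_fun.intros)
next
  case (poly_fun_mult f g)
  then obtain pf pg where pf: "\<forall>k. poly_fun I (\<lambda>x. coeff (pf x) k)" "\<forall>x. f x = poly (pf x) (x i)"
    and pg: "\<forall>k. poly_fun I (\<lambda>x. coeff (pg x) k)" "\<forall>x. g x = poly (pg x) (x i)" by blast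
  show ?case
    by (intro exI[of _ "\<lambda>x. pf x * pg x"])
      (auto simp: pf pg coeff_mult intro!: poly_fun_sum poly_fun.intros)
qed

lemma null_sets_PiM_insertI:
  fixes Z :: "('i \<Rightarrow> real) set"
  assumes "finite I" "i \<notin> I" and Z: "Z \<in> sets (PiM (insert i I) (\<lambda>_. lborel))"
    and sections: "AE x in PiM I (\<lambda>_. lborel). {y. x(i := y) \<in> Z} \<in> null_sets lborel"
  shows "Z \<in> null_sets (PiM (insert i I) (\<lambda>_. lborel))"
proof -
  interpret product_sigma_finite "\<lambda>_. lborel" by standard
  have "emeasure (PiM (insert i I) (\<lambda>_. lborel)) Z =
          (\<integral>\<^sup>+ x. (\<integral>\<^sup>+ y. indicator Z (x(i := y)) \<partial>lborel) \<partial>PiM I (\<lambda>_. lborel))"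
    using Z assms(1,2) by (simp add: product_nn_integral_insert[symmetric])
  also have "\<dots> = (\<integral>\<^sup>+ x. 0 \<partial>PiM I (\<lambda>_. lborel :: real measure))"
  proof (rule nn_integral_cong_AE[where v = "\<lambda>_. 0"])
    show "AE x in PiM I (\<lambda>_. lborel). (\<integral>\<^sup>+ y. indicator Z (x(i := y)) \<partial>lborel) = 0"
      using sections
    proof eventually_elim
      case (elim x)
      have "(\<integral>\<^sup>+ y. indicator Z (x(i := y)) \<partial>lborel) =
              (\<integral>\<^sup>+ y. indicator {y. x(i := y) \<in> Z} y \<partial>lborel)"
        by (intro nn_integral_cong) (simp add: indicator_def)
      also have "\<dots> = emeasure lborel {y. x(i := y) \<in> Z}"
        by (rule nn_integral_indicator[OF null_setsD2[OF elim]])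
      also have "\<dots> = 0" using elim by (rule null_setsD1)
      finally show ?case .
    qed
  qed
  finally show ?thesis using Z by (simp add: null_sets_def)
qed

theorem poly_fun_zero_set_null:
  assumes "finite I" "poly_fun I p" "p x0 \<noteq> 0"
  shows "{x \<in> space (PiM I (\<lambda>_. lborel)). p x = 0} \<in> null_sets (PiM I (\<lambda>_. lborel))"
  using assms
proof (induction I arbitrary: p x0 rule: finite_induct)
  case empty
  have "p x \<noteq> 0" for x using poly_fun_cong[OF empty(1), of x x0] empty(2) by simp
  then have "{x \<in> space (PiM {} (\<lambda>_. lborel)). p x = 0} = {}" by auto
  then show ?case by (metis null_sets.empty_sets)
next
  case (insert i I)
  obtain pp where pp: "\<forall>k. poly_fun I (\<lambda>x. coeff (pp x) k)" "\<forall>x. p x = poly (pp x) (x i)"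
    using poly_fun_insert_coeffs[OF insert(4)] by blast
  obtain k where k: "coeff (pp x0) k \<noteq> 0" using pp insert(5) by (metis leading_coeff_0_iff poly_0)
  let ?Z = "{x \<in> space (PiM (insert i I) (\<lambda>_. lborel)). p x = 0}"
  have Nk: "{x \<in> space (PiM I (\<lambda>_. lborel)). coeff (pp x) k = 0} \<in> null_sets (PiM I (\<lambda>_. lborel))"
    using insert(3)[of "\<lambda>x. coeff (pp x) k" x0] k pp by auto
  have "p \<in> borel_measurable (PiM (insert i I) (\<lambda>_. lborel))"
    by (rule poly_fun_measurable[OF insert(4)])
  then have "?Z \<in> sets (PiM (insert i I) (\<lambda>_. lborel))" by measurable
  moreover have "AE x in PiM I (\<lambda>_. lborel). {y. x(i := y) \<in> ?Z} \<in> null_sets lborel"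
  proof (rule AE_I'[OF Nk], safe)
    fix x assume x: "x \<in> space (PiM I (\<lambda>_. lborel))"
      and not_null: "{y. x(i := y) \<in> ?Z} \<notin> null_sets lborel"
    have "pp (x(i := y)) = pp x" for y
      using poly_fun_cong[OF spec[OF pp(1)], of "x(i := y)" x] insert(2) by (simp add: poly_eq_iff)
    then have "{y. x(i := y) \<in> ?Z} = {y. poly (pp x) y = 0}"
      using x insert(2) pp(2) by (auto simp: space_PiM PiE_def extensional_def)
    then have "pp x = 0"
      using not_null poly_roots_finite finite_imp_null_set_lborel by metis
    then show "coeff (pp x) k = 0" by simp
  qed
  ultimately show ?case by (rule null_sets_PiM_insertI[OF insert(1,2)])
qed

section \<open>Kruskal rank\<close>

definition independent_columns :: "'r set \<Rightarrow> (nat \<Rightarrow> 'r \<Rightarrow> real) \<Rightarrow> nat set \<Rightarrow> bool" where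
  "independent_columns Rows A T \<longleftrightarrow>
     (\<forall>a. (\<forall>row\<in>Rows. (\<Sum>c\<in>T. a c * A c row) = 0) \<longrightarrow> (\<forall>c\<in>T. a c = 0))"

lemma independent_columns_if_det_nonzero:
  fixes A A' :: "nat \<Rightarrow> 'r \<Rightarrow> real"
  assumes t: "bij_betw t {0..<m} T" and rs: "\<And>i. i < m \<Longrightarrow> rs i \<in> Rows"
    and s: "\<And>c. c \<in> T \<Longrightarrow> s c \<noteq> 0" and A: "\<And>c r. A c r = s c * A' c r"
    and det: "Determinant.det (mat m m (\<lambda>(i,j). A' (t j) (rs i))) \<noteq> 0"
  shows "independent_columns Rows A T"
  unfolding independent_columns_def
proof (intro allI impI)
  fix a assume a: "\<forall>row\<in>Rows. (\<Sum>c\<in>T. a c * A c row) = 0"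
  let ?M = "mat m m (\<lambda>(i,j). A' (t j) (rs i))"
  let ?v = "vec m (\<lambda>j. a (t j) * s (t j))"
  have "?M *\<^sub>v ?v = 0\<^sub>v m"
  proof (rule eq_vecI)
    fix i assume "i < dim_vec (0\<^sub>v m :: real vec)"
    then have i: "i < m" by simp
    have "(?M *\<^sub>v ?v) $ i = (\<Sum>j = 0..<m. a (t j) * A (t j) (rs i))"
      using i by (auto simp: scalar_prod_def A intro!: sum.cong)
    also have "\<dots> = (\<Sum>c\<in>T. a c * A c (rs i))"
      using sum.reindex_bij_betw[OF t, of "\<lambda>c. a c * A c (rs i)"] by simp
    also have "\<dots> = 0" using a rs[OF i] by auto
    finally show "(?M *\<^sub>v ?v) $ i = 0\<^sub>v m $ i" using i by simp
  qed simp
  moreover have "?M \<in> carrier_mat m m" "?v \<in> carrier_vec m" by auto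
  ultimately have v0: "?v = 0\<^sub>v m"
    using det_0_iff_vec_prod_zero[of ?M m] det by blast
  show "\<forall>c\<in>T. a c = 0"
  proof
    fix c assume c: "c \<in> T"
    then have "c \<in> t ` {0..<m}" using t by (simp add: bij_betw_def)
    then obtain j where j: "j < m" "t j = c" by auto
    then have "a c * s c = 0" using arg_cong[OF v0, of "\<lambda>v. v $ j"] by simp
    then show "a c = 0" using s[OF c] by simp
  qed
qed

lemma not_independent_columns_if_card_rows_less:
  fixes A :: "nat \<Rightarrow> 'r \<Rightarrow> real"
  assumes Rows: "finite Rows" and n: "card Rows < n"
  shows "\<not> independent_columns Rows A {..<n}"
proof -
  obtain e where e: "bij_betw e {0..<card Rows} Rows" using ex_bij_betw_nat_finite[OF Rows] by blast
  let ?B = "mat n n (\<lambda>(i,j). if i < card Rows then A j (e i) else 0)"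
  have "(\<Prod>i\<in>{0..<n}. if i < card Rows then A (p i) (e i) else 0) = 0" for p
    using n by (intro prod_zero bexI[of _ "n - 1"]) auto
  then have "Determinant.det ?B = 0"
    by (simp add: det_mat_eq_sum_permutes del: prod_zero_iff)
  then obtain v where v: "v \<in> carrier_vec n" "v \<noteq> 0\<^sub>v n" "?B *\<^sub>v v = 0\<^sub>v n"
    using det_0_iff_vec_prod_zero[of ?B n] by auto
  have "\<exists>c<n. v $ c \<noteq> 0"
  proof (rule ccontr)
    assume "\<not> (\<exists>c<n. v $ c \<noteq> 0)"
    then have "v = 0\<^sub>v n" using v(1) by (intro eq_vecI) auto
    then show False using v(2) by simp
  qed
  moreover have "(\<Sum>c\<in>{..<n}. v $ c * A c row) = 0" if row: "row \<in> Rows" for row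
  proof -
    have "row \<in> e ` {0..<card Rows}" using e row by (simp add: bij_betw_def)
    then obtain i where i: "i < card Rows" "e i = row" by auto
    have "(\<Sum>j = 0..<n. A j (e i) * v $ j) = (?B *\<^sub>v v) $ i"
      using i n v(1) by (auto simp: scalar_prod_def intro!: sum.cong)
    also have "\<dots> = 0" using v(3) i n by simp
    finally show ?thesis using i by (simp add: atLeast0LessThan mult.commute)
  qed
  ultimately show ?thesis unfolding independent_columns_def by auto
qed

lemma kruskal_rank_eqI:
  fixes A :: "nat \<Rightarrow> 'r \<Rightarrow> real"
  assumes "finite Rows"
    and "\<And>T. T \<subseteq> {..<n} \<Longrightarrow> card T = min n (card Rows) \<Longrightarrow> independent_columns Rows A T"
  shows "kruskal_rank Rows n A = min n (card Rows)"
  unfolding kruskal_rank_def independent_columns_def[symmetric]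
proof (rule Greatest_equality)
  fix k assume k: "k \<le> n \<and> (\<forall>T\<subseteq>{..<n}. card T = k \<longrightarrow> independent_columns Rows A T)"
  show "k \<le> min n (card Rows)"
  proof (rule ccontr)
    assume "\<not> k \<le> min n (card Rows)"
    then have "\<not> independent_columns Rows A {..<k}"
      using k not_independent_columns_if_card_rows_less[OF assms(1)] by auto
    then show False using k by auto
  qed
qed (use assms(2) in auto)

section \<open>Genericity of full Kruskal rank\<close>

lemma finite_domains: "finite (domains J C D Delta)"
  by (rule finite_subset[of _ "{..<C} \<times> {..<D}"]) (auto simp: domains_def)

lemma finite_param_index: "finite (param_index J Q C D Delta)"
proof -
  have "{(c,d,r). (c,d) \<in> domains J C D Delta \<and> r < Rcd J Q Delta c d - 1} =
          (\<lambda>((c,d),r). (c,d,r)) ` Sigma (domains J C D Delta) (\<lambda>(c,d). {..<Rcd J Q Delta c d - 1})"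
    by force
  moreover have "finite (Sigma (domains J C D Delta) (\<lambda>(c,d). {..<Rcd J Q Delta c d - 1}))"
    using finite_domains by (intro finite_SigmaI) auto
  ultimately show ?thesis unfolding param_index_def by simp
qed

lemma poly_fun_pi_of: "poly_fun (param_index J Q C D Delta) (\<lambda>x. pi_of C x c)"
  unfolding pi_of_def
  by (cases "c < C - 1")
    (auto intro!: poly_fun_diff poly_fun_const poly_fun_sum poly_fun_var simp: param_index_def)

lemma poly_fun_theta_of:
  "(c,d) \<in> domains J C D Delta \<Longrightarrow> poly_fun (param_index J Q C D Delta) (\<lambda>x. theta_of J Q Delta x c d r)"
  unfolding theta_of_def Let_def
  by (cases "r < Rcd J Q Delta c d - 1")
    (auto intro!: poly_fun_diff poly_fun_const poly_fun_sum poly_fun_var simp: param_index_def)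

lemma poly_fun_block_prob_prod:
  "finite Sk \<Longrightarrow> poly_fun (param_index J Q C D Delta) (\<lambda>x. block_prob_prod J Q C D Delta Sk x c f)"
  unfolding block_prob_prod_def block_prob_def cond_prob_def theta_dist_def
  using finite_domains[of J C D Delta]
  by (intro poly_fun_prod poly_fun_sum poly_fun_theta_of)
    (auto intro: finite_subset[OF _ finite_patterns] finite_subset[of _ "{..<D}"] simp: domains_def)

lemma A_col_scaling_nonzero:
  assumes "Sk \<subseteq> pooled J C Delta" "pi_of C x c \<noteq> 0"
  shows "root (card (pooled J C Delta)) (pi_of C x c) ^ card Sk \<noteq> 0"
proof (cases "Sk = {}")
  case False
  then have "card (pooled J C Delta) > 0"
    using assms(1) finite_pooled by (auto simp: card_gt_0_iff)
  then show ?thesis using assms(2) by (simp add: real_root_eq_0_iff)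
qed simp

lemma block_prob_prod_point_mass_diagonal:
  assumes Delta: "\<forall>j<J. \<forall>c<C. Delta j c < D" and "finite Sk" and T: "T \<subseteq> {..<C}"
    and h: "inj_on h T" "h ` T \<subseteq> A_rows Q Sk"
    and w: "\<forall>c\<in>T. w c \<in> patterns Q {..<J} \<and> (\<forall>P\<in>Sk. enc Q P (w c) = h c P)"
    and c: "c \<in> T" "c' \<in> T"
  shows "block_prob_prod J Q C D Delta Sk (point_mass_param J Q C Delta w) c' (h c) =
           (if c = c' then 1 else 0)"
proof -
  have rows: "h c \<in> A_rows Q Sk" "h c' \<in> A_rows Q Sk" using h(2) c by auto
  have "(\<forall>P\<in>Sk. enc Q P (w c') = h c P) \<longleftrightarrow> (\<forall>P\<in>Sk. h c' P = h c P)"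
    using w c(2) by auto
  also have "\<dots> \<longleftrightarrow> h c' = h c"
    using PiE_ext[OF rows(2,1)[unfolded A_rows_def]] by auto
  also have "\<dots> \<longleftrightarrow> c = c'" using inj_onD[OF h(1) _ c(2,1)] by auto
  finally have "(\<forall>P\<in>Sk. enc Q P (w c') = h c P) \<longleftrightarrow> c = c'" .
  moreover have "c' < C" "w c' \<in> patterns Q {..<J}" using T w c(2) by auto
  ultimately show ?thesis
    using block_prob_prod_point_mass[OF Delta _ _ \<open>finite Sk\<close>] by simp
qed

lemma independent_columns_if_minor_nonzero:
  assumes Sk: "Sk \<subseteq> pooled J C Delta" and T: "T \<subseteq> {..<C}"
    and t: "bij_betw t {0..<card T} T" and rs: "\<And>i. i < card T \<Longrightarrow> rs i \<in> A_rows Q Sk"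
    and nonzero: "Determinant.det (mat (card T) (card T)
      (\<lambda>(i,j). block_prob_prod J Q C D Delta Sk x (t j) (rs i))) * (\<Prod>c<C. pi_of C x c) \<noteq> 0"
  shows "independent_columns (A_rows Q Sk) (A_col J Q C D Delta Sk x) T"
proof (rule independent_columns_if_det_nonzero[where A' = "block_prob_prod J Q C D Delta Sk x"
      and s = "\<lambda>c. root (card (pooled J C Delta)) (pi_of C x c) ^ card Sk", OF t rs])
  show "Determinant.det (mat (card T) (card T)
          (\<lambda>(i,j). block_prob_prod J Q C D Delta Sk x (t j) (rs i))) \<noteq> 0"
    using nonzero by simp
  have "(\<Prod>c<C. pi_of C x c) \<noteq> 0" using nonzero by simp
  then have "pi_of C x c \<noteq> 0" if "c \<in> T" for c using that T by (simp add: subset_eq)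
  then show "root (card (pooled J C Delta)) (pi_of C x c) ^ card Sk \<noteq> 0" if "c \<in> T" for c
    using A_col_scaling_nonzero[OF Sk] that by blast
  show "A_col J Q C D Delta Sk x c r = root (card (pooled J C Delta)) (pi_of C x c) ^ card Sk *
          block_prob_prod J Q C D Delta Sk x c r" for c r
    by (rule A_col_eq_scaled_block_prob_prod)
qed

lemma generic_independent_columns:
  assumes C: "C \<ge> 1" and Q: "\<forall>j<J. Q j \<ge> 2" and Delta: "\<forall>j<J. \<forall>c<C. Delta j c < D"
    and Sk: "Sk \<subseteq> pooled J C Delta" and T: "T \<subseteq> {..<C}" "card T \<le> card (A_rows Q Sk)"
  shows "\<exists>Z \<in> null_sets (param_measure J Q C D Delta). \<forall>x \<in> space (param_measure J Q C D Delta).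
           x \<notin> Z \<longrightarrow> independent_columns (A_rows Q Sk) (A_col J Q C D Delta Sk x) T"
proof -
  have "finite Sk" using Sk finite_pooled by (rule finite_subset)
  note blocks = subset_pooled_disjoint_blocks[OF Sk]
  have "finite (A_rows Q Sk)" using finite_A_rows \<open>finite Sk\<close> blocks(2) by blast
  have "finite T" using T(1) by (rule finite_subset) simp
  obtain t where t: "bij_betw t {0..<card T} T" using ex_bij_betw_nat_finite[OF \<open>finite T\<close>] by blast
  then have tT: "t i \<in> T" if "i < card T" for i using that by (auto simp: bij_betw_def)
  have t_eq_iff: "t i = t j \<longleftrightarrow> i = j" if "i < card T" "j < card T" for i j
    using t that by (auto simp: bij_betw_def inj_on_def)
  obtain h where h: "inj_on h T" "h ` T \<subseteq> A_rows Q Sk"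
    using card_le_inj[OF \<open>finite T\<close> \<open>finite (A_rows Q Sk)\<close> T(2)] by blast
  have "\<forall>j<J. Q j > 0" using Q by auto
  then have "\<forall>c\<in>T. \<exists>v. v \<in> patterns Q {..<J} \<and> (\<forall>P\<in>Sk. enc Q P v = h c P)"
    using A_rows_realised[OF _ blocks] h(2) by blast
  from bchoice[OF this] obtain w
    where w: "\<forall>c\<in>T. w c \<in> patterns Q {..<J} \<and> (\<forall>P\<in>Sk. enc Q P (w c) = h c P)"
    by blast
  define minor where
    "minor x = mat (card T) (card T) (\<lambda>(i,j). block_prob_prod J Q C D Delta Sk x (t j) (h (t i)))" for x
  define g where "g x = Determinant.det (minor x) * (\<Prod>c<C. pi_of C x c)" for x
  have "poly_fun (param_index J Q C D Delta) g"
    unfolding g_def minor_def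
    by (intro poly_fun_mult poly_fun_det poly_fun_block_prob_prod \<open>finite Sk\<close> poly_fun_prod poly_fun_pi_of) auto
  moreover have "g (point_mass_param J Q C Delta w) \<noteq> 0"
  proof -
    have "minor (point_mass_param J Q C Delta w) = 1\<^sub>m (card T)"
      by (intro eq_matI)
        (simp_all add: minor_def block_prob_prod_point_mass_diagonal[OF Delta \<open>finite Sk\<close> T(1) h w tT tT] t_eq_iff)
    then show ?thesis using C by (simp add: g_def pi_of_point_mass)
  qed
  ultimately have null: "{x \<in> space (param_measure J Q C D Delta). g x = 0} \<in> null_sets (param_measure J Q C D Delta)"
    unfolding param_measure_def by (rule poly_fun_zero_set_null[OF finite_param_index])
  have "independent_columns (A_rows Q Sk) (A_col J Q C D Delta Sk x) T" if "g x \<noteq> 0" for x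
  proof (rule independent_columns_if_minor_nonzero[where rs = "\<lambda>i. h (t i)", OF Sk T(1) t])
    show "h (t i) \<in> A_rows Q Sk" if "i < card T" for i using h(2) tT[OF that] by blast
  qed (use that in \<open>simp add: g_def minor_def\<close>)
  with null show ?thesis by (intro bexI[of _ "{x \<in> space (param_measure J Q C D Delta). g x = 0}"]) auto
qed

lemma generic_kruskal_rank:
  assumes "C \<ge> 1" "\<forall>j<J. Q j \<ge> 2" "\<forall>j<J. \<forall>c<C. Delta j c < D" and Sk: "Sk \<subseteq> pooled J C Delta"
  shows "\<exists>N \<in> null_sets (param_measure J Q C D Delta). \<forall>x \<in> space (param_measure J Q C D Delta).
           x \<notin> N \<longrightarrow> kruskal_rank (A_rows Q Sk) C (A_col J Q C D Delta Sk x) = min C (\<Prod>j\<in>\<Union>Sk. Q j)"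
proof -
  let ?M = "param_measure J Q C D Delta"
  have "finite Sk" using Sk finite_pooled by (rule finite_subset)
  note blocks = subset_pooled_disjoint_blocks[OF Sk]
  have rows: "finite (A_rows Q Sk)" "card (A_rows Q Sk) = (\<Prod>j\<in>\<Union>Sk. Q j)"
    using finite_A_rows card_A_rows \<open>finite Sk\<close> blocks by auto
  let ?Ts = "{T. T \<subseteq> {..<C} \<and> card T = min C (card (A_rows Q Sk))}"
  have "\<forall>T\<in>?Ts. \<exists>Z \<in> null_sets ?M. \<forall>x \<in> space ?M.
          x \<notin> Z \<longrightarrow> independent_columns (A_rows Q Sk) (A_col J Q C D Delta Sk x) T"
    using generic_independent_columns[OF assms] by simp
  from bchoice[OF this[unfolded Bex_def]] obtain Z where Z: "\<forall>T\<in>?Ts. Z T \<in> null_sets ?M \<and> (\<forall>x \<in> space ?M.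
          x \<notin> Z T \<longrightarrow> independent_columns (A_rows Q Sk) (A_col J Q C D Delta Sk x) T)"
    by blast
  have "(\<Union>T\<in>?Ts. Z T) \<in> null_sets ?M"
    using Z by (intro null_sets_UN') (auto intro: countable_finite)
  moreover have "kruskal_rank (A_rows Q Sk) C (A_col J Q C D Delta Sk x) = min C (\<Prod>j\<in>\<Union>Sk. Q j)"
    if "x \<in> space ?M" "x \<notin> (\<Union>T\<in>?Ts. Z T)" for x
  proof -
    have "kruskal_rank (A_rows Q Sk) C (A_col J Q C D Delta Sk x) = min C (card (A_rows Q Sk))"
      using Z that by (intro kruskal_rank_eqI[OF rows(1)]) blast
    then show ?thesis using rows(2) by simp
  qed
  ultimately show ?thesis by (intro bexI[of _ "\<Union>T\<in>?Ts. Z T"]) auto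
qed

theorem mainTheorem9:
  fixes J C D :: nat and Q :: "nat \<Rightarrow> nat" and Delta :: "nat \<Rightarrow> nat \<Rightarrow> nat"
    and S :: "nat \<Rightarrow> nat set set"
  assumes "C \<ge> 1"
    and "\<forall>j<J. Q j \<ge> 2"
    and "\<forall>j<J. \<forall>c<C. Delta j c < D"
    and "S 0 \<union> S 1 \<union> S 2 = pooled J C Delta"
    and "S 0 \<inter> S 1 = {}" and "S 0 \<inter> S 2 = {}" and "S 1 \<inter> S 2 = {}"
  shows "\<exists>N \<in> null_sets (param_measure J Q C D Delta).
           \<forall>x \<in> space (param_measure J Q C D Delta).
             in_simplices J Q C D Delta x
             \<and> (\<forall>(c,d)\<in>domains J C D Delta.
                   \<not> kron_separable Q (Jset J Delta c d) (theta_dist J Q Delta x c d))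
             \<and> x \<notin> N
             \<longrightarrow> (\<forall>k<3. kruskal_rank (A_rows Q (S k)) C (A_col J Q C D Delta (S k) x)
                          = min C (\<Prod>j\<in>\<Union>(S k). Q j))"
proof -
  let ?M = "param_measure J Q C D Delta"
  have "S k \<subseteq> pooled J C Delta" if "k < 3" for k
  proof -
    have "k = 0 \<or> k = 1 \<or> k = 2" using that by auto
    then show ?thesis using assms(4) by auto
  qed
  then have "\<forall>k\<in>{..<3}. \<exists>N \<in> null_sets ?M. \<forall>x \<in> space ?M. x \<notin> N \<longrightarrow>
               kruskal_rank (A_rows Q (S k)) C (A_col J Q C D Delta (S k) x) = min C (\<Prod>j\<in>\<Union>(S k). Q j)"
    using generic_kruskal_rank[OF assms(1-3)] by simp
  from bchoice[OF this[unfolded Bex_def]] obtain N where N: "\<forall>k\<in>{..<3}. N k \<in> null_sets ?M \<and> (\<forall>x \<in> space ?M.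
      x \<notin> N k \<longrightarrow> kruskal_rank (A_rows Q (S k)) C (A_col J Q C D Delta (S k) x) = min C (\<Prod>j\<in>\<Union>(S k). Q j))"
    by blast
  have "(\<Union>k<3. N k) \<in> null_sets ?M"
    using N by (intro null_sets_UN') auto
  then show ?thesis using N by (intro bexI[of _ "\<Union>k<3. N k"]) auto
qed

end
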